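(* Let $F,G$ be Fourier matrices of the same size $N$ with indexing groups $I_F,I_G$. Then (a) $\mathrm{Stab}(F)=\{(P_\rho,P_{(h^{FF}_\rho)^{-1}}):\ \rho\in\mathrm{Aut}(I_F)\}=\{(P_{(h^{FF}_\rho)^{-1}},P_\rho):\ \rho\in\mathrm{Aut}(I_F)\}$; (b) $\mathrm{Map}(F,G)=\{(P_\chi,P_{(h^{FG}_\chi)^{-1}}):\ \chi\in\mathrm{Iso}(I_G,I_F)\}=\{(P_{(h^{FG}_\chi)^{-1}},P_\chi):\ \chi\in\mathrm{Iso}(I_G,I_F)\}$, where $\mathrm{Stab}(F)$ is the set of pairs $(P,R)$ of $N\times N$ permutation matrices with $PFR^{-1}=F$ and $\mathrm{Map}(F,G)$ is the set of such pairs with $PFR^{-1}=G$.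
   Context: For $n\ge1$, $F_n$ is the $n\times n$ matrix with rows and columns indexed by $\mathbb Z_n$ and entries $e^{2\pi i\,\tilde i\tilde j/n}$. A Fourier matrix is $F=F_{N_1}\otimes\cdots\otimes F_{N_r}$ of size $N=N_1\cdots N_r$, indexed by $I_F=\mathbb Z_{N_1}\times\cdots\times\mathbb Z_{N_r}$ with $F_{i,j}=\prod_x(F_{N_x})_{i_x,j_x}$; group indices correspond to ordinary indices via lexicographic order. For a bijection $\varphi:I_G\to I_F$, $P_\varphi$ is the permutation matrix (rows indexed by $I_G$, columns by $I_F$) with $(P_\varphi)_{i,\varphi(i)}=1$. $\mathrm{Iso}(I_G,I_F)$ is the set of group isomorphisms $I_G\to I_F$ and $\mathrm{Aut}(I_F)=\mathrm{Iso}(I_F,I_F)$. For an isomorphism $\chi:I_G\to I_F$, $h^{FG}_\chi:I_F\to I_G$ is the unique bijection with $F_{\chi(i),j}=G_{i,h^{FG}_\chi(j)}$ for all $i\in I_G$, $j\in I_F$ (it is an isomorphism). *)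

theory Defs
  imports "Jordan_Normal_Form.Gauss_Jordan_Elimination" "HOL-Algebra.Group"
begin

definition Zcarrier :: "nat list \<Rightarrow> nat list set" where
  "Zcarrier ns = {xs. length xs = length ns \<and> (\<forall>k<length ns. xs ! k < ns ! k)}"

definition Zgrp :: "nat list \<Rightarrow> nat list monoid" where
  "Zgrp ns = \<lparr> carrier = Zcarrier ns,
              mult = (\<lambda>xs ys. map (\<lambda>k. (xs ! k + ys ! k) mod ns ! k) [0..<length ns]),
              one = replicate (length ns) 0 \<rparr>"

(* lexicographic correspondence group index -> ordinary index in {0..<N} *)
definition lex_idx :: "nat list \<Rightarrow> nat list \<Rightarrow> nat" where
  "lex_idx ns xs = foldl (\<lambda>acc (n, x). acc * n + x) 0 (zip ns xs)"

definition unlex :: "nat list \<Rightarrow> nat \<Rightarrow> nat list" where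
  "unlex ns = inv_into (Zcarrier ns) (lex_idx ns)"

(* group-indexed entries of F = F_{n_1} \<otimes> ... \<otimes> F_{n_r} *)
definition fourier_entry :: "nat list \<Rightarrow> nat list \<Rightarrow> nat list \<Rightarrow> complex" where
  "fourier_entry ns i j =
     (\<Prod>x<length ns. exp (2 * complex_of_real pi * \<i> * of_nat (i ! x * j ! x) / of_nat (ns ! x)))"

definition fourier_mat :: "nat list \<Rightarrow> complex mat" where
  "fourier_mat ns = mat (prod_list ns) (prod_list ns)
      (\<lambda>(a, b). fourier_entry ns (unlex ns a) (unlex ns b))"

(* P_phi for phi : I_G -> I_F (G indexed by ms, F by ns): (P_phi)_{i, phi i} = 1 *)
definition perm_mat_of :: "nat list \<Rightarrow> nat list \<Rightarrow> (nat list \<Rightarrow> nat list) \<Rightarrow> complex mat" where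
  "perm_mat_of ms ns \<phi> = mat (prod_list ms) (prod_list ns)
      (\<lambda>(a, b). if lex_idx ns (\<phi> (unlex ms a)) = b then 1 else 0)"

definition hFG :: "nat list \<Rightarrow> nat list \<Rightarrow> (nat list \<Rightarrow> nat list) \<Rightarrow> (nat list \<Rightarrow> nat list)" where
  "hFG ns ms \<chi> = (THE h. h \<in> extensional (Zcarrier ns) \<and> bij_betw h (Zcarrier ns) (Zcarrier ms) \<and>
      (\<forall>i\<in>Zcarrier ms. \<forall>j\<in>Zcarrier ns. fourier_entry ns (\<chi> i) j = fourier_entry ms i (h j)))"

definition is_perm_mat :: "nat \<Rightarrow> complex mat \<Rightarrow> bool" where
  "is_perm_mat N P \<longleftrightarrow> (\<exists>\<sigma>. \<sigma> permutes {0..<N} \<and>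
      P = mat N N (\<lambda>(i, j). if \<sigma> i = j then 1 else 0))"

definition Map_set :: "nat \<Rightarrow> complex mat \<Rightarrow> complex mat \<Rightarrow> (complex mat \<times> complex mat) set" where
  "Map_set N F G = {(P, R). is_perm_mat N P \<and> is_perm_mat N R \<and>
      (\<exists>Ri. mat_inverse R = Some Ri \<and> P * F * Ri = G)}"

definition Stab_set :: "nat \<Rightarrow> complex mat \<Rightarrow> (complex mat \<times> complex mat) set" where
  "Stab_set N F = {(P, R). is_perm_mat N P \<and> is_perm_mat N R \<and>
      (\<exists>Ri. mat_inverse R = Some Ri \<and> P * F * Ri = F)}"

end

theory Submission
  imports Defs
begin

text \<open>
  A pair of permutation matrices \<open>(P\<^sub>\<sigma>, P\<^sub>\<tau>)\<close> transforms \<open>F\<close> into \<open>G\<close> exactly when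
  \<open>F\<^bsub>\<sigma> a, \<tau> b\<^esub> = G\<^bsub>a, b\<^esub>\<close> for all \<open>a, b \<in> I\<^sub>G\<close>. The rows of a Fourier matrix are
  characters of its index group and separate its points, so multiplicativity of the rows
  of \<open>G\<close> transfers to \<open>\<sigma>\<close>, which is therefore an isomorphism. Conversely, for an
  isomorphism \<open>\<chi>\<close> every column of \<open>F\<close> read through \<open>\<chi>\<close> is a character of \<open>I\<^sub>G\<close>, and
  every character is a column of \<open>G\<close>; this defines \<open>h\<^sup>F\<^sup>G\<^sub>\<chi>\<close>, and \<open>\<tau>\<close> is forced to be
  its inverse. Since Fourier matrices are symmetric, the roles of the two permutations
  can be exchanged, which gives the second description of each set.
\<close>

section \<open>Lexicographic indexing\<close>

lemma foldl_lex_idx_acc: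
  "length xs = length (ns::nat list) \<Longrightarrow> foldl (\<lambda>acc (n, x). acc * n + x) a (zip ns xs)
     = a * prod_list ns + foldl (\<lambda>acc (n, x). acc * n + x) 0 (zip ns xs)"
proof (induction ns arbitrary: xs a)
  case Nil then show ?case by simp
next
  case (Cons n ns)
  then obtain x xs' where xs: "xs = x # xs'" "length xs' = length ns" by (cases xs) auto
  show ?case using Cons.IH[OF xs(2), of "a*n+x"] Cons.IH[OF xs(2), of "x"] xs
    by (simp add: algebra_simps)
qed

lemma lex_idx_Cons:
  "length xs = length ns \<Longrightarrow> lex_idx (n#ns) (x#xs) = x * prod_list ns + lex_idx ns xs"
  unfolding lex_idx_def using foldl_lex_idx_acc[of xs ns x] by simp

lemma Zcarrier_Nil: "Zcarrier [] = {[]}"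
  by (auto simp: Zcarrier_def)

lemma Zcarrier_Cons: "Zcarrier (n#ns) = {x#xs | x xs. x < n \<and> xs \<in> Zcarrier ns}"
proof (intro equalityI subsetI)
  fix ys assume "ys \<in> Zcarrier (n#ns)"
  then show "ys \<in> {x#xs | x xs. x < n \<and> xs \<in> Zcarrier ns}"
    by (cases ys) (auto simp: Zcarrier_def)
qed (auto simp: Zcarrier_def nth_Cons split: nat.splits)

lemma length_Zcarrier: "xs \<in> Zcarrier ns \<Longrightarrow> length xs = length ns"
  by (simp add: Zcarrier_def)

lemma lex_idx_less: "xs \<in> Zcarrier ns \<Longrightarrow> lex_idx ns xs < prod_list ns"
proof (induction ns arbitrary: xs)
  case Nil then show ?case by (simp add: Zcarrier_Nil lex_idx_def)
next
  case (Cons n ns)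
  then obtain y ys where xs: "xs = y # ys" "y < n" "ys \<in> Zcarrier ns" by (auto simp: Zcarrier_Cons)
  then have "lex_idx (n#ns) xs < (y + 1) * prod_list ns"
    using Cons.IH by (simp add: lex_idx_Cons length_Zcarrier)
  also have "\<dots> \<le> n * prod_list ns" using xs(2) by (intro mult_right_mono) auto
  finally show ?case by simp
qed

lemma inj_on_lex_idx: "inj_on (lex_idx ns) (Zcarrier ns)"
proof (induction ns)
  case Nil then show ?case by (simp add: Zcarrier_Nil)
next
  case (Cons n ns)
  let ?P = "prod_list ns"
  show ?case
  proof (rule inj_onI)
    fix a b assume "a \<in> Zcarrier (n#ns)" "b \<in> Zcarrier (n#ns)"
      and eq: "lex_idx (n # ns) a = lex_idx (n # ns) b"
    then obtain x xs y ys where a: "a = x#xs" "xs \<in> Zcarrier ns"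
      and b: "b = y#ys" "ys \<in> Zcarrier ns" by (auto simp: Zcarrier_Cons)
    have e: "x * ?P + lex_idx ns xs = y * ?P + lex_idx ns ys"
      using eq a b by (simp add: lex_idx_Cons length_Zcarrier)
    have "(x * ?P + lex_idx ns xs) div ?P = x" "(y * ?P + lex_idx ns ys) div ?P = y"
      using lex_idx_less[OF a(2)] lex_idx_less[OF b(2)] by auto
    then have "x = y" using e by metis
    moreover have "xs = ys" using e \<open>x = y\<close> Cons.IH a b by (auto simp: inj_on_def)
    ultimately show "a = b" using a b by simp
  qed
qed

lemma lex_idx_image: "lex_idx ns ` Zcarrier ns = {0..<prod_list ns}"
proof (induction ns)
  case Nil then show ?case by (simp add: Zcarrier_Nil lex_idx_def)
next
  case (Cons n ns)
  let ?P = "prod_list ns"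
  show ?case
  proof (intro equalityI subsetI)
    fix v assume "v \<in> lex_idx (n # ns) ` Zcarrier (n # ns)"
    then show "v \<in> {0..<prod_list (n # ns)}" using lex_idx_less[of _ "n # ns"] by auto
  next
    fix v assume "v \<in> {0..<prod_list (n # ns)}"
    then have v: "v < n * ?P" by simp
    then have "?P > 0" by (cases "?P = 0") auto
    then obtain xs where xs: "xs \<in> Zcarrier ns" "lex_idx ns xs = v mod ?P"
      using Cons.IH by (metis atLeastLessThan_iff imageE mod_less_divisor zero_le)
    have "v div ?P < n" using v \<open>?P > 0\<close> by (simp add: div_less_iff_less_mult)
    moreover have "lex_idx (n#ns) (v div ?P # xs) = v"
      using xs by (simp add: lex_idx_Cons length_Zcarrier)
    ultimately show "v \<in> lex_idx (n # ns) ` Zcarrier (n # ns)"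
      using xs(1) by (force simp: Zcarrier_Cons)
  qed
qed

lemma bij_betw_lex_idx: "bij_betw (lex_idx ns) (Zcarrier ns) {0..<prod_list ns}"
  by (simp add: bij_betw_def inj_on_lex_idx lex_idx_image)

lemma bij_betw_unlex: "bij_betw (unlex ns) {0..<prod_list ns} (Zcarrier ns)"
  unfolding unlex_def by (rule bij_betw_inv_into[OF bij_betw_lex_idx])

lemma unlex_in_Zcarrier: "a < prod_list ns \<Longrightarrow> unlex ns a \<in> Zcarrier ns"
  using bij_betw_apply[OF bij_betw_unlex] by simp

lemma lex_idx_unlex: "a < prod_list ns \<Longrightarrow> lex_idx ns (unlex ns a) = a"
  unfolding unlex_def using bij_betw_inv_into_right[OF bij_betw_lex_idx] by simp

lemma unlex_lex_idx: "x \<in> Zcarrier ns \<Longrightarrow> unlex ns (lex_idx ns x) = x"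
  unfolding unlex_def using bij_betw_inv_into_left[OF bij_betw_lex_idx] by simp

lemma card_Zcarrier: "card (Zcarrier ns) = prod_list ns"
  using bij_betw_same_card[OF bij_betw_lex_idx] by simp

lemma finite_Zcarrier: "finite (Zcarrier ns)"
  using bij_betw_finite[OF bij_betw_lex_idx] by simp

section \<open>Roots of unity\<close>

definition unit_root :: "nat \<Rightarrow> nat \<Rightarrow> complex" where
  "unit_root m a = exp (2 * complex_of_real pi * \<i> * of_nat a / of_nat m)"

lemma unit_root_eq_cis: "unit_root m a = cis (2 * pi * real a / real m)"
  unfolding unit_root_def cis_conv_exp by (simp add: mult_ac)

lemma unit_root_nonzero: "unit_root m a \<noteq> 0"
  by (simp add: unit_root_def)

lemma unit_root_add: "unit_root m (a + b) = unit_root m a * unit_root m b"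
  unfolding unit_root_def by (simp add: exp_add[symmetric] add_divide_distrib distrib_left)

lemma unit_root_mult: "unit_root m (a * b) = unit_root m b ^ a"
  unfolding unit_root_def by (simp add: exp_of_nat_mult[symmetric] mult_ac)

lemma unit_root_self: "0 < m \<Longrightarrow> unit_root m m = 1"
  by (simp add: unit_root_def)

lemma unit_root_mod:
  assumes "0 < m"
  shows "unit_root m (a mod m) = unit_root m a"
proof -
  have "unit_root m a = unit_root m (a div m * m + a mod m)" by simp
  also have "\<dots> = unit_root m m ^ (a div m) * unit_root m (a mod m)"
    by (simp only: unit_root_add unit_root_mult)
  finally show ?thesis using unit_root_self[OF assms] by simp
qed

lemma unit_root_inj: "a < m \<Longrightarrow> b < m \<Longrightarrow> unit_root m a = unit_root m b \<Longrightarrow> a = b"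
  using bij_betw_roots_unity[of m] unfolding unit_root_eq_cis bij_betw_def inj_on_def by auto

lemma root_of_unity_eq_unit_root: "0 < m \<Longrightarrow> z ^ m = 1 \<Longrightarrow> \<exists>j<m. z = unit_root m j"
  using bij_betw_roots_unity[of m] unfolding unit_root_eq_cis bij_betw_def by (auto simp: image_iff)

section \<open>Characters of \<open>\<int>\<^sub>n\<^sub>1 \<times> \<dots> \<times> \<int>\<^sub>n\<^sub>r\<close>\<close>

lemma nth_gt_0_if_zero_notin_set: "0 \<notin> set (xs :: nat list) \<Longrightarrow> k < length xs \<Longrightarrow> 0 < xs ! k"
  by (metis gr0I nth_mem)

lemma Zgrp_carrier [simp]: "carrier (Zgrp ns) = Zcarrier ns"
  by (simp add: Zgrp_def)

lemma Zgrp_mult: "a \<otimes>\<^bsub>Zgrp ns\<^esub> b = map (\<lambda>k. (a ! k + b ! k) mod ns ! k) [0..<length ns]"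
  by (simp add: Zgrp_def)

lemma Zgrp_mult_closed: "0 \<notin> set ns \<Longrightarrow> a \<otimes>\<^bsub>Zgrp ns\<^esub> b \<in> Zcarrier ns"
  by (auto simp: Zcarrier_def Zgrp_mult nth_gt_0_if_zero_notin_set)

lemma fourier_entry_unit_root:
  "fourier_entry ns i j = (\<Prod>x<length ns. unit_root (ns!x) (i!x * j!x))"
  by (simp add: fourier_entry_def unit_root_def)

lemma fourier_entry_nonzero: "fourier_entry ns i j \<noteq> 0"
  by (simp add: fourier_entry_unit_root unit_root_nonzero)

lemma fourier_entry_commute: "fourier_entry ns i j = fourier_entry ns j i"
  by (simp add: fourier_entry_unit_root mult.commute)

lemma fourier_entry_mult:
  assumes "0 \<notin> set ns"
  shows "fourier_entry ns (a \<otimes>\<^bsub>Zgrp ns\<^esub> b) k = fourier_entry ns a k * fourier_entry ns b k"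
proof -
  have "unit_root (ns!x) ((a \<otimes>\<^bsub>Zgrp ns\<^esub> b)!x * k!x)
      = unit_root (ns!x) (a!x * k!x) * unit_root (ns!x) (b!x * k!x)"
    if x: "x < length ns" for x
  proof -
    have m: "0 < ns!x" using assms x by (simp add: nth_gt_0_if_zero_notin_set)
    have "unit_root (ns!x) ((a \<otimes>\<^bsub>Zgrp ns\<^esub> b)!x * k!x)
        = unit_root (ns!x) (((a!x + b!x) mod ns!x * k!x) mod ns!x)"
      using x unit_root_mod[OF m] by (simp add: Zgrp_mult)
    also have "\<dots> = unit_root (ns!x) ((a!x + b!x) * k!x)"
      by (metis mod_mult_left_eq unit_root_mod[OF m])
    finally show ?thesis by (simp add: add_mult_distrib unit_root_add)
  qed
  then show ?thesis by (simp add: fourier_entry_unit_root prod.distrib[symmetric])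
qed

definition Zsingle :: "nat list \<Rightarrow> nat \<Rightarrow> nat \<Rightarrow> nat list" where
  "Zsingle ns x c = map (\<lambda>y. if y = x then c else 0) [0..<length ns]"

lemma Zsingle_in_Zcarrier: "0 \<notin> set ns \<Longrightarrow> c < ns!x \<Longrightarrow> Zsingle ns x c \<in> Zcarrier ns"
  by (auto simp: Zsingle_def Zcarrier_def nth_gt_0_if_zero_notin_set)

lemma Zsingle_zero: "Zsingle ns x 0 = replicate (length ns) 0"
  by (simp add: Zsingle_def map_replicate_const)

lemma fourier_entry_Zsingle:
  assumes "x < length ns" "length i = length ns"
  shows "fourier_entry ns i (Zsingle ns x c) = unit_root (ns!x) (i!x * c)"
proof -
  have "fourier_entry ns i (Zsingle ns x c)
      = (\<Prod>y<length ns. if y = x then unit_root (ns!x) (i!x * c) else 1)"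
    unfolding fourier_entry_unit_root by (rule prod.cong) (auto simp: Zsingle_def unit_root_def)
  then show ?thesis using assms by (simp add: prod.delta)
qed

lemma fourier_entry_separates:
  assumes "0 \<notin> set ns" "i \<in> Zcarrier ns" "i' \<in> Zcarrier ns"
    and eq: "\<forall>k\<in>Zcarrier ns. fourier_entry ns i k = fourier_entry ns i' k"
  shows "i = i'"
proof (rule nth_equalityI)
  show "length i = length i'" using assms by (simp add: Zcarrier_def)
  fix x assume "x < length i"
  then have x: "x < length ns" using assms by (simp add: Zcarrier_def)
  have lt: "i!x < ns!x" "i'!x < ns!x" using assms x by (auto simp: Zcarrier_def)
  show "i!x = i'!x"
  proof (cases "ns!x = 1")
    case True then show ?thesis using lt by simp
  next
    case False
    then have "Zsingle ns x 1 \<in> Zcarrier ns" using Zsingle_in_Zcarrier lt assms(1) by simp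
    then have "fourier_entry ns i (Zsingle ns x 1) = fourier_entry ns i' (Zsingle ns x 1)"
      using eq by blast
    then have "unit_root (ns!x) (i!x) = unit_root (ns!x) (i'!x)"
      using fourier_entry_Zsingle[OF x, of _ 1] assms(2,3) by (simp add: length_Zcarrier)
    then show ?thesis using unit_root_inj lt by blast
  qed
qed

definition Zcharacter :: "nat list \<Rightarrow> (nat list \<Rightarrow> complex) \<Rightarrow> bool" where
  "Zcharacter ns \<phi> \<longleftrightarrow> (\<forall>a\<in>Zcarrier ns. \<phi> a \<noteq> 0) \<and>
     (\<forall>a\<in>Zcarrier ns. \<forall>b\<in>Zcarrier ns. \<phi> (a \<otimes>\<^bsub>Zgrp ns\<^esub> b) = \<phi> a * \<phi> b)"

lemma Zcharacter_unit:
  assumes "0 \<notin> set ns" "Zcharacter ns \<phi>"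
  shows "\<phi> (replicate (length ns) 0) = 1"
proof -
  let ?z = "replicate (length ns) 0"
  have z: "?z \<in> Zcarrier ns"
    using assms(1) by (auto simp: Zcarrier_def nth_gt_0_if_zero_notin_set)
  have "?z \<otimes>\<^bsub>Zgrp ns\<^esub> ?z = ?z" by (auto simp: Zgrp_mult intro!: nth_equalityI)
  then have "\<phi> ?z * \<phi> ?z = \<phi> ?z" using assms(2) z by (metis Zcharacter_def)
  then show ?thesis using assms(2) z by (simp add: Zcharacter_def)
qed

lemma Zcharacter_Zsingle:
  assumes ns: "0 \<notin> set ns" and \<phi>: "Zcharacter ns \<phi>" and x: "x < length ns"
  shows "\<exists>r<ns!x. \<forall>c<ns!x. \<phi> (Zsingle ns x c) = unit_root (ns!x) r ^ c"
proof (cases "ns!x = 1")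
  case True
  then show ?thesis using Zcharacter_unit[OF ns \<phi>] by (simp add: Zsingle_zero)
next
  case False
  then have m: "1 < ns!x" using ns x by (metis less_one nat_neq_iff nth_mem)
  have hom: "\<phi> (a \<otimes>\<^bsub>Zgrp ns\<^esub> b) = \<phi> a * \<phi> b" if "a \<in> Zcarrier ns" "b \<in> Zcarrier ns" for a b
    using \<phi> that by (simp add: Zcharacter_def)
  have single: "Zsingle ns x c \<in> Zcarrier ns" if "c < ns!x" for c
    using Zsingle_in_Zcarrier[OF ns that] .
  have step: "Zsingle ns x c \<otimes>\<^bsub>Zgrp ns\<^esub> Zsingle ns x 1 = Zsingle ns x (Suc c mod ns!x)" for c
    by (auto simp: Zgrp_mult Zsingle_def)
  define w where "w = \<phi> (Zsingle ns x 1)"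
  have powers: "\<phi> (Zsingle ns x c) = w ^ c" if "c < ns!x" for c
    using that
  proof (induction c)
    case 0 then show ?case using Zcharacter_unit[OF ns \<phi>] by (simp add: Zsingle_zero)
  next
    case (Suc c)
    then have "\<phi> (Zsingle ns x (Suc c)) = \<phi> (Zsingle ns x c) * w"
      using hom[OF single single[OF m], of c] step[of c] by (simp add: w_def)
    then show ?case using Suc by (simp add: mult.commute)
  qed
  have "ns!x = Suc (ns!x - 1)" using m by simp
  then have "w ^ ns!x = w ^ (ns!x - 1) * w" by (metis power_Suc2)
  also have "\<dots> = \<phi> (Zsingle ns x (ns!x - 1) \<otimes>\<^bsub>Zgrp ns\<^esub> Zsingle ns x 1)"
    using powers[of "ns!x - 1"] hom[OF single single[OF m], of "ns!x - 1"] m by (simp add: w_def)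
  also have "\<dots> = \<phi> (Zsingle ns x 0)" using step[of "ns!x - 1"] m by simp
  also have "\<dots> = 1" using Zcharacter_unit[OF ns \<phi>] by (simp add: Zsingle_zero)
  finally obtain r where "r < ns!x" "w = unit_root (ns!x) r"
    using root_of_unity_eq_unit_root[of "ns!x" w] m by auto
  then show ?thesis using powers by auto
qed

lemma Zcharacter_eq_fourier_entry:
  assumes ns: "0 \<notin> set ns" and \<phi>: "Zcharacter ns \<phi>"
  shows "\<exists>k\<in>Zcarrier ns. \<forall>i\<in>Zcarrier ns. \<phi> i = fourier_entry ns i k"
proof -
  obtain kf where kf: "\<And>x. x < length ns \<Longrightarrow>
      kf x < ns!x \<and> (\<forall>c<ns!x. \<phi> (Zsingle ns x c) = unit_root (ns!x) (kf x) ^ c)"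
    using Zcharacter_Zsingle[OF ns \<phi>] by metis
  define k where "k = map kf [0..<length ns]"
  have "k \<in> Zcarrier ns" using kf by (simp add: k_def Zcarrier_def)
  moreover have "\<phi> i = fourier_entry ns i k" if i: "i \<in> Zcarrier ns" for i
  proof -
    define prefix where "prefix t = map (\<lambda>y. if y < t then i!y else 0) [0..<length ns]" for t
    have prefix_in: "prefix t \<in> Zcarrier ns" for t
      using i ns by (auto simp: prefix_def Zcarrier_def nth_gt_0_if_zero_notin_set)
    have "\<phi> (prefix t) = (\<Prod>y<t. unit_root (ns!y) (kf y) ^ (i!y))" if "t \<le> length ns" for t
      using that
    proof (induction t)
      case 0
      then show ?case using Zcharacter_unit[OF ns \<phi>] by (simp add: prefix_def map_replicate_const)
    next
      case (Suc t)
      then have t: "t < length ns" "i!t < ns!t" using i by (auto simp: Zcarrier_def)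
      have "prefix t \<otimes>\<^bsub>Zgrp ns\<^esub> Zsingle ns t (i!t) = prefix (Suc t)"
        using i by (auto simp: Zgrp_mult prefix_def Zsingle_def Zcarrier_def intro!: nth_equalityI)
      then have "\<phi> (prefix (Suc t)) = \<phi> (prefix t) * \<phi> (Zsingle ns t (i!t))"
        using \<phi> prefix_in Zsingle_in_Zcarrier[OF ns t(2)] by (metis Zcharacter_def)
      then show ?case using Suc kf[OF t(1)] t by simp
    qed
    moreover have "prefix (length ns) = i"
      using i by (auto simp: prefix_def Zcarrier_def intro!: nth_equalityI)
    ultimately have "\<phi> i = (\<Prod>y<length ns. unit_root (ns!y) (kf y) ^ (i!y))" by force
    also have "\<dots> = fourier_entry ns i k"
      unfolding fourier_entry_unit_root by (rule prod.cong) (auto simp: k_def unit_root_mult)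
    finally show ?thesis .
  qed
  ultimately show ?thesis by blast
qed

lemma Zcharacter_fourier_entry_comp_iso:
  assumes "0 \<notin> set ns" "0 \<notin> set ms" "\<chi> \<in> iso (Zgrp ms) (Zgrp ns)"
  shows "Zcharacter ms (\<lambda>i. fourier_entry ns (\<chi> i) j)"
  using assms fourier_entry_mult[OF assms(1)]
  by (auto simp: Zcharacter_def fourier_entry_nonzero iso_def hom_def)

section \<open>Permutation matrices\<close>

definition perm_mat :: "nat \<Rightarrow> (nat \<Rightarrow> nat) \<Rightarrow> complex mat" where
  "perm_mat N f = mat N N (\<lambda>(i, j). if f i = j then 1 else 0)"

lemma dim_perm_mat [simp]: "dim_row (perm_mat N f) = N" "dim_col (perm_mat N f) = N"
  by (simp_all add: perm_mat_def)

lemma perm_mat_carrier [simp]: "perm_mat N f \<in> carrier_mat N N"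
  by (simp add: carrier_matI)

lemma perm_mat_mult:
  assumes f: "\<forall>i<N. f i < N" and M: "M \<in> carrier_mat N n"
  shows "perm_mat N f * M = mat N n (\<lambda>(i, j). M $$ (f i, j))"
proof (rule eq_matI)
  fix i j assume "i < dim_row (mat N n (\<lambda>(i, j). M $$ (f i, j)))"
    and "j < dim_col (mat N n (\<lambda>(i, j). M $$ (f i, j)))"
  then have ij: "i < N" "j < n" by auto
  have "(perm_mat N f * M) $$ (i, j) = (\<Sum>d\<in>{0..<N}. (if f i = d then 1 else 0) * M $$ (d, j))"
    using ij M by (simp add: perm_mat_def scalar_prod_def)
  also have "\<dots> = (\<Sum>d\<in>{0..<N}. if f i = d then M $$ (d, j) else 0)"
    by (rule sum.cong) auto
  also have "\<dots> = M $$ (f i, j)" using f ij by simp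
  finally show "(perm_mat N f * M) $$ (i, j) = mat N n (\<lambda>(i, j). M $$ (f i, j)) $$ (i, j)"
    using ij by simp
qed (use M in auto)

lemma mult_transpose_perm_mat:
  assumes f: "\<forall>j<N. f j < N" and M: "M \<in> carrier_mat n N"
  shows "M * transpose_mat (perm_mat N f) = mat n N (\<lambda>(i, j). M $$ (i, f j))"
proof (rule eq_matI)
  fix i j assume "i < dim_row (mat n N (\<lambda>(i, j). M $$ (i, f j)))"
    and "j < dim_col (mat n N (\<lambda>(i, j). M $$ (i, f j)))"
  then have ij: "i < n" "j < N" by auto
  have "(M * transpose_mat (perm_mat N f)) $$ (i, j)
      = (\<Sum>d\<in>{0..<N}. M $$ (i, d) * (if f j = d then 1 else 0))"
    using ij M by (simp add: perm_mat_def scalar_prod_def)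
  also have "\<dots> = (\<Sum>d\<in>{0..<N}. if f j = d then M $$ (i, d) else 0)"
    by (rule sum.cong) auto
  also have "\<dots> = M $$ (i, f j)" using f ij by simp
  finally show "(M * transpose_mat (perm_mat N f)) $$ (i, j) = mat n N (\<lambda>(i, j). M $$ (i, f j)) $$ (i, j)"
    using ij by simp
qed (use M in auto)

lemma perm_mat_mult_transpose:
  assumes "bij_betw f {0..<N} {0..<N}"
  shows "perm_mat N f * transpose_mat (perm_mat N f) = 1\<^sub>m N"
proof -
  have f: "\<forall>j<N. f j < N" using bij_betw_apply[OF assms] by simp
  have "perm_mat N f * transpose_mat (perm_mat N f) = mat N N (\<lambda>(i, j). perm_mat N f $$ (i, f j))"
    by (rule mult_transpose_perm_mat[OF f perm_mat_carrier])
  also have "\<dots> = 1\<^sub>m N"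
    using f bij_betw_imp_inj_on[OF assms] by (intro eq_matI) (auto simp: perm_mat_def inj_on_def)
  finally show ?thesis .
qed

lemma transpose_perm_mat:
  assumes f: "bij_betw f {0..<N} {0..<N}"
  shows "transpose_mat (perm_mat N f) = perm_mat N (inv_into {0..<N} f)"
proof (rule eq_matI)
  fix i j assume "i < dim_row (perm_mat N (inv_into {0..<N} f))"
    "j < dim_col (perm_mat N (inv_into {0..<N} f))"
  then have ij: "i < N" "j < N" by (auto simp: perm_mat_def)
  then have "f j = i \<longleftrightarrow> inv_into {0..<N} f i = j"
    using f by (metis atLeastLessThan_iff bij_betw_inv_into_left bij_betw_inv_into_right zero_le)
  then show "transpose_mat (perm_mat N f) $$ (i, j) = perm_mat N (inv_into {0..<N} f) $$ (i, j)"
    using ij by (simp add: perm_mat_def)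
qed (auto simp: perm_mat_def)

lemma mat_inverse_perm_mat:
  assumes f: "bij_betw f {0..<N} {0..<N}"
  shows "mat_inverse (perm_mat N f) = Some (transpose_mat (perm_mat N f))"
proof -
  let ?A = "perm_mat N f" and ?T = "transpose_mat (perm_mat N f)"
  have T: "?T \<in> carrier_mat N N" by simp
  have AT: "?A * ?T = 1\<^sub>m N" using perm_mat_mult_transpose[OF f] .
  have "?T * ?A = 1\<^sub>m N"
    using perm_mat_mult_transpose[OF bij_betw_inv_into[OF f]] transpose_perm_mat[OF f]
    by (metis transpose_transpose)
  then have "?A \<in> Units (ring_mat TYPE(complex) N ())"
    using AT T unfolding Units_def ring_mat_def by auto
  then obtain B where B: "mat_inverse ?A = Some B"
    using mat_inverse(1)[OF perm_mat_carrier] by fastforce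
  then have BA: "B * ?A = 1\<^sub>m N" and Bc: "B \<in> carrier_mat N N"
    using mat_inverse(2)[OF perm_mat_carrier] by auto
  have "B = B * (?A * ?T)" using AT Bc by simp
  also have "\<dots> = (B * ?A) * ?T" by (rule assoc_mult_mat[OF Bc perm_mat_carrier T, symmetric])
  also have "\<dots> = ?T" using BA left_mult_one_mat[OF T] by simp
  finally show ?thesis using B by simp
qed

lemma is_perm_mat_iff_perm_mat:
  "is_perm_mat N P \<longleftrightarrow> (\<exists>\<pi>. \<pi> permutes {0..<N} \<and> P = perm_mat N \<pi>)"
  by (simp add: is_perm_mat_def perm_mat_def)

lemma perm_mat_cong: "(\<And>i. i < N \<Longrightarrow> f i = g i) \<Longrightarrow> perm_mat N f = perm_mat N g"
  by (intro eq_matI) (auto simp: perm_mat_def)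

lemma perm_mat_of_eq_perm_mat:
  "prod_list ms = N \<Longrightarrow> prod_list ns = N \<Longrightarrow>
     perm_mat_of ms ns \<sigma> = perm_mat N (\<lambda>a. lex_idx ns (\<sigma> (unlex ms a)))"
  by (simp add: perm_mat_of_def perm_mat_def)

lemma perm_mat_of_cong:
  "(\<And>a. a \<in> Zcarrier ms \<Longrightarrow> f a = g a) \<Longrightarrow> perm_mat_of ms ns f = perm_mat_of ms ns g"
  unfolding perm_mat_of_def by (intro eq_matI) (auto simp: unlex_in_Zcarrier)

lemma bij_betw_lex_idx_conj:
  assumes "prod_list ms = N" "prod_list ns = N" "bij_betw \<sigma> (Zcarrier ms) (Zcarrier ns)"
  shows "bij_betw (\<lambda>a. lex_idx ns (\<sigma> (unlex ms a))) {0..<N} {0..<N}"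
  using bij_betw_trans[OF bij_betw_trans[OF bij_betw_unlex assms(3)] bij_betw_lex_idx] assms(1,2)
  by (simp add: o_def)

lemma is_perm_mat_perm_mat_of:
  assumes N: "prod_list ms = N" "prod_list ns = N" and \<sigma>: "bij_betw \<sigma> (Zcarrier ms) (Zcarrier ns)"
  shows "is_perm_mat N (perm_mat_of ms ns \<sigma>)"
proof -
  define f where "f a = lex_idx ns (\<sigma> (unlex ms a))" for a
  define \<pi> where "\<pi> a = (if a < N then f a else a)" for a
  have "bij_betw \<pi> {0..<N} {0..<N}"
    using bij_betw_lex_idx_conj[OF N \<sigma>] by (rule bij_betw_cong[THEN iffD1, rotated])
      (auto simp: \<pi>_def f_def)
  then have "\<pi> permutes {0..<N}" by (rule bij_imp_permutes) (auto simp: \<pi>_def)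
  moreover have "perm_mat_of ms ns \<sigma> = perm_mat N \<pi>"
    unfolding perm_mat_of_eq_perm_mat[OF N] by (rule perm_mat_cong) (simp add: \<pi>_def f_def)
  ultimately show ?thesis unfolding is_perm_mat_iff_perm_mat by blast
qed

lemma is_perm_mat_obtain_perm_mat_of:
  assumes N: "prod_list ms = N" "prod_list ns = N" and P: "is_perm_mat N P"
  obtains \<sigma> where "bij_betw \<sigma> (Zcarrier ms) (Zcarrier ns)" "P = perm_mat_of ms ns \<sigma>"
proof -
  from P obtain \<pi> where \<pi>: "\<pi> permutes {0..<N}" and P: "P = perm_mat N \<pi>"
    unfolding is_perm_mat_iff_perm_mat by blast
  define \<sigma> where "\<sigma> = (\<lambda>x. unlex ns (\<pi> (lex_idx ms x)))"
  have \<pi>_bij: "bij_betw \<pi> {0..<N} {0..<N}" by (rule permutes_imp_bij[OF \<pi>])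
  then have \<pi>': "bij_betw \<pi> {0..<prod_list ms} {0..<prod_list ns}" using N by simp
  have "bij_betw (unlex ns \<circ> (\<pi> \<circ> lex_idx ms)) (Zcarrier ms) (Zcarrier ns)"
    by (rule bij_betw_trans[OF bij_betw_trans[OF bij_betw_lex_idx \<pi>'] bij_betw_unlex])
  then have "bij_betw \<sigma> (Zcarrier ms) (Zcarrier ns)" by (simp add: \<sigma>_def o_def)
  moreover have "perm_mat_of ms ns \<sigma> = P"
    unfolding perm_mat_of_eq_perm_mat[OF N] P
    using bij_betw_apply[OF \<pi>_bij] N by (intro perm_mat_cong) (simp add: \<sigma>_def lex_idx_unlex)
  ultimately show ?thesis using that by blast
qed

section \<open>Permutation equivalences of Fourier matrices\<close>

definition intertwines_fourier ::
    "nat list \<Rightarrow> nat list \<Rightarrow> (nat list \<Rightarrow> nat list) \<Rightarrow> (nat list \<Rightarrow> nat list) \<Rightarrow> bool" where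
  "intertwines_fourier ns ms \<sigma> \<tau> \<longleftrightarrow>
     (\<forall>a\<in>Zcarrier ms. \<forall>b\<in>Zcarrier ms. fourier_entry ns (\<sigma> a) (\<tau> b) = fourier_entry ms a b)"

lemma intertwines_fourier_swap:
  assumes "intertwines_fourier ns ms \<sigma> \<tau>"
  shows "intertwines_fourier ns ms \<tau> \<sigma>"
  unfolding intertwines_fourier_def
proof (intro ballI)
  fix a b assume "a \<in> Zcarrier ms" "b \<in> Zcarrier ms"
  then have "fourier_entry ns (\<sigma> b) (\<tau> a) = fourier_entry ms b a"
    using assms by (simp add: intertwines_fourier_def)
  then show "fourier_entry ns (\<tau> a) (\<sigma> b) = fourier_entry ms a b"
    by (simp add: fourier_entry_commute)
qed

lemma perm_mat_of_mult_fourier_mat: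
  assumes N: "prod_list ms = N" "prod_list ns = N"
    and \<sigma>: "bij_betw \<sigma> (Zcarrier ms) (Zcarrier ns)" and \<tau>: "bij_betw \<tau> (Zcarrier ms) (Zcarrier ns)"
  shows "perm_mat_of ms ns \<sigma> * fourier_mat ns * transpose_mat (perm_mat_of ms ns \<tau>)
       = mat N N (\<lambda>(i, j). fourier_entry ns (\<sigma> (unlex ms i)) (\<tau> (unlex ms j)))"
proof -
  define f where "f a = lex_idx ns (\<sigma> (unlex ms a))" for a
  define g where "g a = lex_idx ns (\<tau> (unlex ms a))" for a
  have \<sigma>_in: "\<sigma> (unlex ms i) \<in> Zcarrier ns" and \<tau>_in: "\<tau> (unlex ms i) \<in> Zcarrier ns"
    if "i < N" for i
    using that N bij_betw_apply[OF \<sigma>] bij_betw_apply[OF \<tau>] unlex_in_Zcarrier by auto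
  have f: "\<forall>i<N. f i < N" and g: "\<forall>i<N. g i < N"
    unfolding f_def g_def using \<sigma>_in \<tau>_in lex_idx_less[of _ ns] N(2) by simp_all
  have F: "fourier_mat ns = mat N N (\<lambda>(a, b). fourier_entry ns (unlex ns a) (unlex ns b))"
    using N by (simp add: fourier_mat_def)
  have "perm_mat N f * fourier_mat ns = mat N N (\<lambda>(i, j). fourier_mat ns $$ (f i, j))"
    by (rule perm_mat_mult[OF f]) (simp add: F)
  then have "perm_mat N f * fourier_mat ns * transpose_mat (perm_mat N g)
      = mat N N (\<lambda>(i, j). fourier_mat ns $$ (f i, g j))"
    using mult_transpose_perm_mat[OF g, of "perm_mat N f * fourier_mat ns" N] g
    by (auto intro!: eq_matI)
  also have "\<dots> = mat N N (\<lambda>(i, j). fourier_entry ns (\<sigma> (unlex ms i)) (\<tau> (unlex ms j)))"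
    using f g \<sigma>_in \<tau>_in by (intro eq_matI) (simp_all add: F f_def g_def unlex_lex_idx)
  finally show ?thesis unfolding perm_mat_of_eq_perm_mat[OF N] f_def g_def .
qed

lemma perm_mat_of_in_Map_set_iff:
  assumes N: "prod_list ms = N" "prod_list ns = N"
    and \<sigma>: "bij_betw \<sigma> (Zcarrier ms) (Zcarrier ns)" and \<tau>: "bij_betw \<tau> (Zcarrier ms) (Zcarrier ns)"
  shows "(perm_mat_of ms ns \<sigma>, perm_mat_of ms ns \<tau>) \<in> Map_set N (fourier_mat ns) (fourier_mat ms)
     \<longleftrightarrow> intertwines_fourier ns ms \<sigma> \<tau>"
proof -
  have "mat_inverse (perm_mat_of ms ns \<tau>) = Some (transpose_mat (perm_mat_of ms ns \<tau>))"
    unfolding perm_mat_of_eq_perm_mat[OF N]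
    by (rule mat_inverse_perm_mat[OF bij_betw_lex_idx_conj[OF N \<tau>]])
  then have "(perm_mat_of ms ns \<sigma>, perm_mat_of ms ns \<tau>) \<in> Map_set N (fourier_mat ns) (fourier_mat ms)
      \<longleftrightarrow> mat N N (\<lambda>(i, j). fourier_entry ns (\<sigma> (unlex ms i)) (\<tau> (unlex ms j))) = fourier_mat ms"
    using is_perm_mat_perm_mat_of[OF N] \<sigma> \<tau>
    by (simp add: Map_set_def perm_mat_of_mult_fourier_mat[OF N \<sigma> \<tau>])
  also have "\<dots> \<longleftrightarrow> (\<forall>i<N. \<forall>j<N. fourier_entry ns (\<sigma> (unlex ms i)) (\<tau> (unlex ms j))
                                  = fourier_entry ms (unlex ms i) (unlex ms j))"
    using N by (simp add: fourier_mat_def mat_eq_iff)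
  also have "\<dots> \<longleftrightarrow> intertwines_fourier ns ms \<sigma> \<tau>"
  proof -
    have "Zcarrier ms = unlex ms ` {0..<N}" using bij_betw_unlex[of ms] N by (simp add: bij_betw_def)
    then show ?thesis by (auto simp: intertwines_fourier_def)
  qed
  finally show ?thesis .
qed

lemma in_Map_set_fourier_mat_iff:
  assumes N: "prod_list ms = N" "prod_list ns = N"
  shows "(P, R) \<in> Map_set N (fourier_mat ns) (fourier_mat ms) \<longleftrightarrow>
     (\<exists>\<sigma> \<tau>. bij_betw \<sigma> (Zcarrier ms) (Zcarrier ns) \<and> bij_betw \<tau> (Zcarrier ms) (Zcarrier ns) \<and>
        P = perm_mat_of ms ns \<sigma> \<and> R = perm_mat_of ms ns \<tau> \<and> intertwines_fourier ns ms \<sigma> \<tau>)"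
proof
  assume PR: "(P, R) \<in> Map_set N (fourier_mat ns) (fourier_mat ms)"
  then have "is_perm_mat N P" "is_perm_mat N R" by (simp_all add: Map_set_def)
  then obtain \<sigma> \<tau> where "bij_betw \<sigma> (Zcarrier ms) (Zcarrier ns)" "P = perm_mat_of ms ns \<sigma>"
    and "bij_betw \<tau> (Zcarrier ms) (Zcarrier ns)" "R = perm_mat_of ms ns \<tau>"
    using is_perm_mat_obtain_perm_mat_of[OF N] by metis
  with PR show "\<exists>\<sigma> \<tau>. bij_betw \<sigma> (Zcarrier ms) (Zcarrier ns) \<and> bij_betw \<tau> (Zcarrier ms) (Zcarrier ns) \<and>
        P = perm_mat_of ms ns \<sigma> \<and> R = perm_mat_of ms ns \<tau> \<and> intertwines_fourier ns ms \<sigma> \<tau>"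
    using perm_mat_of_in_Map_set_iff[OF N] by blast
qed (use perm_mat_of_in_Map_set_iff[OF N] in blast)

lemma Map_set_fourier_mat_swap:
  assumes "prod_list ms = N" "prod_list ns = N"
  shows "(P, R) \<in> Map_set N (fourier_mat ns) (fourier_mat ms) \<longleftrightarrow>
         (R, P) \<in> Map_set N (fourier_mat ns) (fourier_mat ms)"
  unfolding in_Map_set_fourier_mat_iff[OF assms] by (blast intro: intertwines_fourier_swap)

section \<open>The map \<open>h\<^sup>F\<^sup>G\<close>\<close>

definition is_hFG :: "nat list \<Rightarrow> nat list \<Rightarrow> (nat list \<Rightarrow> nat list) \<Rightarrow> (nat list \<Rightarrow> nat list) \<Rightarrow> bool" where
  "is_hFG ns ms \<chi> h \<longleftrightarrow> h \<in> extensional (Zcarrier ns) \<and> bij_betw h (Zcarrier ns) (Zcarrier ms) \<and>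
      (\<forall>i\<in>Zcarrier ms. \<forall>j\<in>Zcarrier ns. fourier_entry ns (\<chi> i) j = fourier_entry ms i (h j))"

lemma is_hFG_unique:
  assumes ms: "0 \<notin> set ms" and h: "is_hFG ns ms \<chi> h" and h': "is_hFG ns ms \<chi> h'"
  shows "h = h'"
proof (rule extensionalityI)
  show "h \<in> extensional (Zcarrier ns)" "h' \<in> extensional (Zcarrier ns)"
    using h h' by (simp_all add: is_hFG_def)
  fix j assume j: "j \<in> Zcarrier ns"
  show "h j = h' j"
  proof (rule fourier_entry_separates[OF ms])
    show "h j \<in> Zcarrier ms" "h' j \<in> Zcarrier ms"
      using h h' j by (auto simp: is_hFG_def bij_betw_apply)
    have "fourier_entry ms k (h j) = fourier_entry ms k (h' j)" if "k \<in> Zcarrier ms" for k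
      using h h' j that by (simp add: is_hFG_def)
    then show "\<forall>k\<in>Zcarrier ms. fourier_entry ms (h j) k = fourier_entry ms (h' j) k"
      by (simp add: fourier_entry_commute)
  qed
qed

lemma hFG_eqI: "0 \<notin> set ms \<Longrightarrow> is_hFG ns ms \<chi> h \<Longrightarrow> hFG ns ms \<chi> = h"
  unfolding hFG_def is_hFG_def[symmetric] by (rule the_equality) (auto intro: is_hFG_unique)

lemma is_hFG_exists:
  assumes ns: "0 \<notin> set ns" and ms: "0 \<notin> set ms" and N: "prod_list ns = prod_list ms"
    and \<chi>: "\<chi> \<in> iso (Zgrp ms) (Zgrp ns)"
  shows "\<exists>h. is_hFG ns ms \<chi> h"
proof -
  have \<chi>_bij: "bij_betw \<chi> (Zcarrier ms) (Zcarrier ns)" using \<chi> by (simp add: iso_def)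
  \<comment> \<open>each column \<open>j\<close> of \<open>F\<close>, read through \<open>\<chi>\<close>, is a character of \<open>I\<^sub>G\<close>, hence a column of \<open>G\<close>\<close>
  obtain h0 where h0: "\<And>j. j \<in> Zcarrier ns \<Longrightarrow> h0 j \<in> Zcarrier ms \<and>
      (\<forall>i\<in>Zcarrier ms. fourier_entry ns (\<chi> i) j = fourier_entry ms i (h0 j))"
    using Zcharacter_eq_fourier_entry[OF ms Zcharacter_fourier_entry_comp_iso[OF ns ms \<chi>]] by metis
  define h where "h = restrict h0 (Zcarrier ns)"
  have h_eq: "fourier_entry ns (\<chi> i) j = fourier_entry ms i (h j)"
    if "i \<in> Zcarrier ms" "j \<in> Zcarrier ns" for i j
    using h0 that by (simp add: h_def)
  have "inj_on h (Zcarrier ns)"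
  proof (rule inj_onI)
    fix j j' assume j: "j \<in> Zcarrier ns" and j': "j' \<in> Zcarrier ns" and "h j = h j'"
    then have col: "fourier_entry ns (\<chi> i) j = fourier_entry ns (\<chi> i) j'" if "i \<in> Zcarrier ms" for i
      using h_eq that by simp
    have "fourier_entry ns j x = fourier_entry ns j' x" if "x \<in> Zcarrier ns" for x
    proof -
      obtain i where "i \<in> Zcarrier ms" "x = \<chi> i" using \<chi>_bij \<open>x \<in> Zcarrier ns\<close> by (auto simp: bij_betw_def)
      then show ?thesis using col by (metis fourier_entry_commute)
    qed
    then have "\<forall>x\<in>Zcarrier ns. fourier_entry ns j x = fourier_entry ns j' x" by blast
    then show "j = j'" by (rule fourier_entry_separates[OF ns j j'])
  qed
  moreover have "h ` Zcarrier ns \<subseteq> Zcarrier ms" using h0 by (auto simp: h_def)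
  ultimately have "bij_betw h (Zcarrier ns) (Zcarrier ms)"
    using N by (simp add: bij_betw_def card_subset_eq card_image card_Zcarrier finite_Zcarrier)
  then show ?thesis using h_eq by (auto simp: is_hFG_def h_def)
qed

lemma iso_intertwines_fourier:
  assumes ns: "0 \<notin> set ns" and ms: "0 \<notin> set ms" and N: "prod_list ns = prod_list ms"
    and \<chi>: "\<chi> \<in> iso (Zgrp ms) (Zgrp ns)"
  shows "bij_betw (inv_into (Zcarrier ns) (hFG ns ms \<chi>)) (Zcarrier ms) (Zcarrier ns)"
    and "intertwines_fourier ns ms \<chi> (inv_into (Zcarrier ns) (hFG ns ms \<chi>))"
proof -
  obtain h where h: "is_hFG ns ms \<chi> h" using is_hFG_exists[OF ns ms N \<chi>] by blast
  then have h_bij: "bij_betw h (Zcarrier ns) (Zcarrier ms)" by (simp add: is_hFG_def)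
  show "bij_betw (inv_into (Zcarrier ns) (hFG ns ms \<chi>)) (Zcarrier ms) (Zcarrier ns)"
    unfolding hFG_eqI[OF ms h] by (rule bij_betw_inv_into[OF h_bij])
  have "fourier_entry ns (\<chi> a) (inv_into (Zcarrier ns) h b) = fourier_entry ms a b"
    if "a \<in> Zcarrier ms" "b \<in> Zcarrier ms" for a b
    using h that bij_betw_apply[OF bij_betw_inv_into[OF h_bij]] bij_betw_inv_into_right[OF h_bij]
    by (simp add: is_hFG_def)
  then show "intertwines_fourier ns ms \<chi> (inv_into (Zcarrier ns) (hFG ns ms \<chi>))"
    unfolding hFG_eqI[OF ms h] intertwines_fourier_def by blast
qed

lemma intertwines_fourier_imp_iso:
  assumes ns: "0 \<notin> set ns" and ms: "0 \<notin> set ms"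
    and \<sigma>: "bij_betw \<sigma> (Zcarrier ms) (Zcarrier ns)" and \<tau>: "\<tau> ` Zcarrier ms = Zcarrier ns"
    and \<sigma>\<tau>: "intertwines_fourier ns ms \<sigma> \<tau>"
  shows "\<sigma> \<in> iso (Zgrp ms) (Zgrp ns)"
proof -
  have "\<sigma> (a \<otimes>\<^bsub>Zgrp ms\<^esub> b) = \<sigma> a \<otimes>\<^bsub>Zgrp ns\<^esub> \<sigma> b"
    if a: "a \<in> Zcarrier ms" and b: "b \<in> Zcarrier ms" for a b
  proof (rule fourier_entry_separates[OF ns])
    show "\<sigma> (a \<otimes>\<^bsub>Zgrp ms\<^esub> b) \<in> Zcarrier ns"
      using bij_betw_apply[OF \<sigma> Zgrp_mult_closed[OF ms]] .
    show "\<sigma> a \<otimes>\<^bsub>Zgrp ns\<^esub> \<sigma> b \<in> Zcarrier ns" by (rule Zgrp_mult_closed[OF ns])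
    have "fourier_entry ns (\<sigma> (a \<otimes>\<^bsub>Zgrp ms\<^esub> b)) (\<tau> c)
        = fourier_entry ns (\<sigma> a \<otimes>\<^bsub>Zgrp ns\<^esub> \<sigma> b) (\<tau> c)" if c: "c \<in> Zcarrier ms" for c
    proof -
      have "fourier_entry ns (\<sigma> (a \<otimes>\<^bsub>Zgrp ms\<^esub> b)) (\<tau> c) = fourier_entry ms (a \<otimes>\<^bsub>Zgrp ms\<^esub> b) c"
        using \<sigma>\<tau> c Zgrp_mult_closed[OF ms] by (simp add: intertwines_fourier_def)
      also have "\<dots> = fourier_entry ms a c * fourier_entry ms b c" by (rule fourier_entry_mult[OF ms])
      also have "\<dots> = fourier_entry ns (\<sigma> a) (\<tau> c) * fourier_entry ns (\<sigma> b) (\<tau> c)"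
        using \<sigma>\<tau> a b c by (simp add: intertwines_fourier_def)
      also have "\<dots> = fourier_entry ns (\<sigma> a \<otimes>\<^bsub>Zgrp ns\<^esub> \<sigma> b) (\<tau> c)"
        by (rule fourier_entry_mult[OF ns, symmetric])
      finally show ?thesis .
    qed
    moreover have "k \<in> Zcarrier ns \<Longrightarrow> \<exists>c\<in>Zcarrier ms. k = \<tau> c" for k
      using \<tau> by blast
    ultimately show "\<forall>k\<in>Zcarrier ns. fourier_entry ns (\<sigma> (a \<otimes>\<^bsub>Zgrp ms\<^esub> b)) k
                             = fourier_entry ns (\<sigma> a \<otimes>\<^bsub>Zgrp ns\<^esub> \<sigma> b) k"
      by metis
  qed
  then show ?thesis using \<sigma> by (auto simp: iso_def hom_def bij_betw_def)
qed

lemma intertwines_fourier_imp_inv_hFG: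
  assumes ms: "0 \<notin> set ms" and \<tau>: "bij_betw \<tau> (Zcarrier ms) (Zcarrier ns)"
    and \<sigma>\<tau>: "intertwines_fourier ns ms \<sigma> \<tau>" and b: "b \<in> Zcarrier ms"
  shows "inv_into (Zcarrier ns) (hFG ns ms \<sigma>) b = \<tau> b"
proof -
  define h where "h = restrict (inv_into (Zcarrier ms) \<tau>) (Zcarrier ns)"
  have h_bij: "bij_betw h (Zcarrier ns) (Zcarrier ms)"
    using bij_betw_inv_into[OF \<tau>] by (rule bij_betw_cong[THEN iffD1, rotated]) (simp add: h_def)
  have \<tau>_h: "\<tau> (h j) = j" if "j \<in> Zcarrier ns" for j
    using bij_betw_inv_into_right[OF \<tau> that] that by (simp add: h_def)
  have "is_hFG ns ms \<sigma> h"
    unfolding is_hFG_def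
  proof (intro conjI ballI)
    show "h \<in> extensional (Zcarrier ns)" by (simp add: h_def)
    show "bij_betw h (Zcarrier ns) (Zcarrier ms)" by (rule h_bij)
    fix i j assume i: "i \<in> Zcarrier ms" and j: "j \<in> Zcarrier ns"
    have "fourier_entry ns (\<sigma> i) (\<tau> (h j)) = fourier_entry ms i (h j)"
      using \<sigma>\<tau> i bij_betw_apply[OF h_bij j] by (simp add: intertwines_fourier_def)
    then show "fourier_entry ns (\<sigma> i) j = fourier_entry ms i (h j)" using \<tau>_h[OF j] by simp
  qed
  then have "hFG ns ms \<sigma> = h" by (rule hFG_eqI[OF ms])
  moreover have "h (\<tau> b) = b"
    using bij_betw_inv_into_left[OF \<tau> b] bij_betw_apply[OF \<tau> b] by (simp add: h_def)
  ultimately show ?thesis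
    using bij_betw_inv_into_left[OF h_bij bij_betw_apply[OF \<tau> b]] by simp
qed

lemma Map_set_fourier_mat:
  assumes ns: "0 \<notin> set ns" and ms: "0 \<notin> set ms" and N: "prod_list ns = prod_list ms"
  shows "Map_set (prod_list ns) (fourier_mat ns) (fourier_mat ms) =
    {(perm_mat_of ms ns \<chi>, perm_mat_of ms ns (inv_into (Zcarrier ns) (hFG ns ms \<chi>))) | \<chi>.
       \<chi> \<in> iso (Zgrp ms) (Zgrp ns)}"
proof (intro equalityI subsetI)
  fix x assume x_in: "x \<in> Map_set (prod_list ns) (fourier_mat ns) (fourier_mat ms)"
  obtain P R where PR: "x = (P, R)" by (cases x)
  obtain \<sigma> \<tau> where \<sigma>: "bij_betw \<sigma> (Zcarrier ms) (Zcarrier ns)"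
    and \<tau>: "bij_betw \<tau> (Zcarrier ms) (Zcarrier ns)" and x: "x = (perm_mat_of ms ns \<sigma>, perm_mat_of ms ns \<tau>)"
    and \<sigma>\<tau>: "intertwines_fourier ns ms \<sigma> \<tau>"
    using x_in in_Map_set_fourier_mat_iff[OF N[symmetric] refl, of P R] unfolding PR by blast
  have "perm_mat_of ms ns \<tau> = perm_mat_of ms ns (inv_into (Zcarrier ns) (hFG ns ms \<sigma>))"
    using intertwines_fourier_imp_inv_hFG[OF ms \<tau> \<sigma>\<tau>] by (intro perm_mat_of_cong) simp
  moreover have "\<sigma> \<in> iso (Zgrp ms) (Zgrp ns)"
    using intertwines_fourier_imp_iso[OF ns ms \<sigma> _ \<sigma>\<tau>] \<tau> by (simp add: bij_betw_def)
  ultimately show "x \<in> {(perm_mat_of ms ns \<chi>, perm_mat_of ms ns (inv_into (Zcarrier ns) (hFG ns ms \<chi>))) | \<chi>.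
       \<chi> \<in> iso (Zgrp ms) (Zgrp ns)}" using x by blast
next
  fix x assume "x \<in> {(perm_mat_of ms ns \<chi>, perm_mat_of ms ns (inv_into (Zcarrier ns) (hFG ns ms \<chi>))) | \<chi>.
       \<chi> \<in> iso (Zgrp ms) (Zgrp ns)}"
  then obtain \<chi> where \<chi>: "\<chi> \<in> iso (Zgrp ms) (Zgrp ns)"
    and x: "x = (perm_mat_of ms ns \<chi>, perm_mat_of ms ns (inv_into (Zcarrier ns) (hFG ns ms \<chi>)))"
    by blast
  have "bij_betw \<chi> (Zcarrier ms) (Zcarrier ns)" using \<chi> by (simp add: iso_def)
  then show "x \<in> Map_set (prod_list ns) (fourier_mat ns) (fourier_mat ms)"
    unfolding x in_Map_set_fourier_mat_iff[OF N[symmetric] refl]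
    using iso_intertwines_fourier[OF ns ms N \<chi>] by blast
qed

lemma Map_set_fourier_mat_swapped:
  assumes ns: "0 \<notin> set ns" and ms: "0 \<notin> set ms" and N: "prod_list ns = prod_list ms"
  shows "Map_set (prod_list ns) (fourier_mat ns) (fourier_mat ms) =
    {(perm_mat_of ms ns (inv_into (Zcarrier ns) (hFG ns ms \<chi>)), perm_mat_of ms ns \<chi>) | \<chi>.
       \<chi> \<in> iso (Zgrp ms) (Zgrp ns)}"
proof (rule Set.set_eqI)
  fix x :: "complex mat \<times> complex mat"
  obtain P R where x: "x = (P, R)" by (cases x)
  have "(P, R) \<in> Map_set (prod_list ns) (fourier_mat ns) (fourier_mat ms)
      \<longleftrightarrow> (R, P) \<in> Map_set (prod_list ns) (fourier_mat ns) (fourier_mat ms)"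
    by (rule Map_set_fourier_mat_swap[OF N[symmetric] refl])
  also have "\<dots> \<longleftrightarrow> (R, P) \<in> {(perm_mat_of ms ns \<chi>, perm_mat_of ms ns (inv_into (Zcarrier ns) (hFG ns ms \<chi>))) | \<chi>.
       \<chi> \<in> iso (Zgrp ms) (Zgrp ns)}"
    by (simp only: Map_set_fourier_mat[OF assms])
  finally show "x \<in> Map_set (prod_list ns) (fourier_mat ns) (fourier_mat ms) \<longleftrightarrow>
    x \<in> {(perm_mat_of ms ns (inv_into (Zcarrier ns) (hFG ns ms \<chi>)), perm_mat_of ms ns \<chi>) | \<chi>.
       \<chi> \<in> iso (Zgrp ms) (Zgrp ns)}"
    unfolding x by blast
qed

theorem corollary4p8:
  fixes ns ms :: "nat list"
  assumes "\<forall>n\<in>set ns. 1 \<le> n" and "\<forall>m\<in>set ms. 1 \<le> m"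
    and "prod_list ns = prod_list ms"
  shows "Stab_set (prod_list ns) (fourier_mat ns) =
           {(perm_mat_of ns ns \<rho>, perm_mat_of ns ns (inv_into (Zcarrier ns) (hFG ns ns \<rho>))) | \<rho>.
              \<rho> \<in> iso (Zgrp ns) (Zgrp ns)}
       \<and> Stab_set (prod_list ns) (fourier_mat ns) =
           {(perm_mat_of ns ns (inv_into (Zcarrier ns) (hFG ns ns \<rho>)), perm_mat_of ns ns \<rho>) | \<rho>.
              \<rho> \<in> iso (Zgrp ns) (Zgrp ns)}
       \<and> Map_set (prod_list ns) (fourier_mat ns) (fourier_mat ms) =
           {(perm_mat_of ms ns \<chi>, perm_mat_of ms ns (inv_into (Zcarrier ns) (hFG ns ms \<chi>))) | \<chi>.
              \<chi> \<in> iso (Zgrp ms) (Zgrp ns)}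
       \<and> Map_set (prod_list ns) (fourier_mat ns) (fourier_mat ms) =
           {(perm_mat_of ms ns (inv_into (Zcarrier ns) (hFG ns ms \<chi>)), perm_mat_of ms ns \<chi>) | \<chi>.
              \<chi> \<in> iso (Zgrp ms) (Zgrp ns)}"
proof -
  have ns: "0 \<notin> set ns" and ms: "0 \<notin> set ms" using assms(1,2) by force+
  have Stab: "Stab_set (prod_list ns) (fourier_mat ns)
      = Map_set (prod_list ns) (fourier_mat ns) (fourier_mat ns)"
    by (simp add: Stab_set_def Map_set_def)
  show ?thesis unfolding Stab
    by (intro conjI Map_set_fourier_mat[OF ns ns refl] Map_set_fourier_mat_swapped[OF ns ns refl]
        Map_set_fourier_mat[OF ns ms assms(3)] Map_set_fourier_mat_swapped[OF ns ms assms(3)])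
qed

end
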